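(* For every integer $r\ge2$, $$ \begin{aligned} \log\mathcal C_r\left(\frac14\right) &=\frac{\log2}{2^{2r-1}}-\frac{(r-1)!}{(2\pi)^{r-1}}\sin\left(\frac{r\pi}{2}\right)\zeta_E(r) \\ &\quad-\frac{r-1}{2^{2(r-1)}}\sum_{k=0}^{\lfloor \frac{r-2}{2}\rfloor }(-1)^k(2k)!\binom{r-2}{2k}\left(\frac2\pi\right)^{2k+1}\beta(2k+2) \\ &\quad-\frac{r-1}{2^{2r-1}}\sum_{k=1}^{\lceil \frac{r-2}2\rceil}\frac{(-1)^{k-1}(2k-1)!}{\pi^{2k}}\binom{r-2}{2k-1}\zeta_E(2k+1). \end{aligned} $$
   Context: For an integer $r\ge2$ let $P_r(y)=(1-y)\exp\left(y+\frac{y^2}{2}+\cdots+\frac{y^r}{r}\right)$. The multiple cosine function of Kurokawa–Koyama of order $r\ge2$ is $\mathcal C_r(x)=\prod_{n\ge1,\ n\text{ odd}}\left\{P_r\left(\frac{x}{n/2}\right)P_r\left(-\frac{x}{n/2}\right)^{(-1)^{r-1}}\right\}^{(n/2)^{r-1}}$, interpreted as $\mathcal C_r(x)=\exp\Big(\sum_{n\ge1,\,n\text{ odd}}(n/2)^{r-1}\big[\operatorname{Log}P_r(2x/n)+(-1)^{r-1}\operatorname{Log}P_r(-2x/n)\big]\Big)$, where $\operatorname{Log}P_r(y):=\operatorname{Log}(1-y)+y+\frac{y^2}{2}+\cdots+\frac{y^r}{r}$ with $\operatorname{Log}$ the principal branch. The series converges and defines a holomorphic function on $D=\mathbb C\setminus\big((-\infty,-\tfrac12]\cup[\tfrac12,\infty)\big)$,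 positive on $(-\tfrac12,\tfrac12)$; $\log\mathcal C_r(x)$ denotes the exponent above (the real logarithm for real $|x|<\tfrac12$). $\zeta_E(s)=\sum_{n=1}^\infty\frac{(-1)^{n+1}}{n^s}=(1-2^{1-s})\zeta(s)$, $\beta(s)=\sum_{n=0}^\infty\frac{(-1)^n}{(2n+1)^s}$. Empty sums are $0$. *)

theory Defs
  imports "HOL-Analysis.Analysis"
begin

definition LogP :: "nat \<Rightarrow> complex \<Rightarrow> complex" where
  "LogP r y = Ln (1 - y) + (\<Sum>j=1..r. y ^ j / of_nat j)"

definition logC :: "nat \<Rightarrow> complex \<Rightarrow> complex" where
  "logC r x = (\<Sum>m. (of_nat (2*m+1) / 2) ^ (r - 1) *
      (LogP r (2 * x / of_nat (2*m+1)) + (-1) ^ (r - 1) * LogP r (- 2 * x / of_nat (2*m+1))))"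

definition zetaE :: "nat \<Rightarrow> real" where
  "zetaE s = (\<Sum>n. (-1) ^ n / real (n + 1) ^ s)"

definition dbeta :: "nat \<Rightarrow> real" where
  "dbeta s = (\<Sum>n. (-1) ^ n / real (2 * n + 1) ^ s)"

end

theory Submission
  imports Defs
begin

(*
  Write r = p + 2. For real x the m-th term of the series defining log C_r(x) has t-derivative
  t^(p+1) d/dt ln (1 - (2t/(2m+1))^2), so integration by parts and the product
  cos (pi t) = prod_m (1 - (2t/(2m+1))^2) give
    log C_r(1/4) = 4^-(p+1) ln cos (pi/4) - (p+1) * integral_0^(1/4) t^p ln cos (pi t) dt.
  The Fourier series ln (2 cos (pi t)) = sum_k (-1)^(k+1) cos (2 pi k t) / k is obtained as the
  boundary value s -> 1 of ln |1 + s e^(2 pi i t)|; the passage to the limit is justified because the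
  moments integral_0^(1/4) t^p cos (2 pi k t) dt are O(1/k). Each moment is evaluated with the explicit
  primitive of t^p e^(2 pi i k t); as e^(2 pi i k/4) = i^k, summing over k and splitting by the parity
  of k produces the values of the Dirichlet beta function and of zeta_E.
*)

section \<open>Products and series for the cosine\<close>

lemma sums_integral_Weierstrass:
  fixes f :: "nat \<Rightarrow> real \<Rightarrow> real"
  assumes cont: "\<And>k. continuous_on {a..b} (f k)"
    and bound: "\<And>k t. t \<in> {a..b} \<Longrightarrow> \<bar>f k t\<bar> \<le> M k"
    and M: "summable M"
    and s: "\<And>t. t \<in> {a..b} \<Longrightarrow> (\<lambda>k. f k t) sums g t"
  shows "(\<lambda>k. integral {a..b} (f k)) sums integral {a..b} g"
proof -
  have u: "uniform_limit {a..b} (\<lambda>n t. \<Sum>i<n. f i t) (\<lambda>t. \<Sum>i. f i t) sequentially"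
    using bound M by (intro Weierstrass_m_test) auto
  have u': "uniform_limit {a..b} (\<lambda>n t. \<Sum>i<n. f i t) g sequentially"
  proof (rule uniform_limit_cong[THEN iffD1, OF _ _ u])
    show "\<forall>\<^sub>F n in sequentially. \<forall>x\<in>{a..b}. (\<Sum>i<n. f i x) = (\<Sum>i<n. f i x)" by simp
    show "\<And>x. x \<in> {a..b} \<Longrightarrow> (\<Sum>i. f i x) = g x" using s sums_unique by metis
  qed
  obtain I J where I: "\<And>n. ((\<lambda>t. \<Sum>i<n. f i t) has_integral I n) {a..b}"
    and J: "(g has_integral J) {a..b}" and lim: "I \<longlonglongrightarrow> J"
    using uniform_limit_integral[OF u'] cont by (auto intro!: continuous_on_sum)
  have "I n = (\<Sum>i<n. integral {a..b} (f i))" for n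
  proof -
    have "((\<lambda>t. \<Sum>i<n. f i t) has_integral (\<Sum>i<n. integral {a..b} (f i))) {a..b}"
      by (intro has_integral_sum) (auto intro!: integrable_continuous_interval cont)
    thus ?thesis using I[of n] by (rule has_integral_unique[rotated])
  qed
  hence "I = (\<lambda>n. \<Sum>i<n. integral {a..b} (f i))" by auto
  thus ?thesis using lim J unfolding sums_def by (simp add: integral_unique)
qed

lemma prod_sin_factors_odd_split:
  fixes t :: real
  shows "(\<Prod>k=1..2*N. 1 - (2*t)^2 / real k^2) =
         (\<Prod>m<N. 1 - (2*t / real (2*m+1))^2) * (\<Prod>k=1..N. 1 - t^2 / real k^2)"
proof (induction N)
  case 0 then show ?case by simp
next
  case (Suc N)
  have e: "2 * Suc N = Suc (Suc (2*N))" by simp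
  have "(\<Prod>k=1..2*Suc N. 1 - (2*t)^2 / real k^2) =
        (\<Prod>k=1..2*N. 1 - (2*t)^2 / real k^2) * (1 - (2*t)^2 / real (2*N+1)^2) * (1 - (2*t)^2 / real (2*N+2)^2)"
    unfolding e by (simp add: algebra_simps)
  also have "(1 - (2*t)^2 / real (2*N+2)^2) = 1 - t^2 / real (Suc N)^2"
  proof -
    have "real (2*N+2) = 2 * real (Suc N)" by simp
    hence "(2*t)^2 / real (2*N+2)^2 = (2^2 * t^2) / (2^2 * real (Suc N)^2)"
      by (simp only: power_mult_distrib)
    thus ?thesis by simp
  qed
  also have "(1 - (2*t)^2 / real (2*N+1)^2) = 1 - (2*t / real (2*N+1))^2"
    by (simp add: power_divide)
  finally show ?case using Suc by (simp add: algebra_simps)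
qed

lemma cos_pi_product_tendsto:
  fixes t :: real
  assumes sin: "sin (pi*t) \<noteq> 0"
  shows "(\<lambda>N. \<Prod>m<N. 1 - (2*t / real (2*m+1))^2) \<longlonglongrightarrow> cos (pi*t)"
proof -
  have t: "t \<noteq> 0" using sin by auto
  define P where "P N = (\<Prod>k=1..N. 1 - (2*t)^2 / real k^2)" for N
  define Q where "Q N = (\<Prod>k=1..N. 1 - t^2 / real k^2)" for N
  have "1 - t^2 / real k^2 \<noteq> 0" if "k \<ge> 1" for k
  proof
    assume "1 - t^2 / real k^2 = 0"
    then have "t^2 = real k^2" using that by (simp add: field_simps)
    then have "t = real k \<or> t = - real k" by (simp add: power2_eq_iff)
    then show False using sin by (auto simp: sin_npi mult.commute[of pi])
  qed
  then have Q: "Q N \<noteq> 0" for N unfolding Q_def by (simp add: prod_zero_iff)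
  have "(\<lambda>N. P N) \<longlonglongrightarrow> sin (pi * (2*t)) / (pi * (2*t))"
    unfolding P_def using sin_product_formula_real'[of "2*t"] t by simp
  then have "(\<lambda>N. P (2*N)) \<longlonglongrightarrow> sin (pi * (2*t)) / (pi * (2*t))"
    using LIMSEQ_subseq_LIMSEQ[of P _ "\<lambda>N. 2*N"] by (simp add: strict_mono_def o_def)
  moreover have "(\<lambda>N. Q N) \<longlonglongrightarrow> sin (pi * t) / (pi * t)"
    unfolding Q_def using sin_product_formula_real'[of t] t by simp
  ultimately have "(\<lambda>N. P (2*N) / Q N) \<longlonglongrightarrow> (sin (pi * (2*t)) / (pi * (2*t))) / (sin (pi * t) / (pi * t))"
    by (intro tendsto_divide) (use sin t in simp_all)
  also have "(sin (pi * (2*t)) / (pi * (2*t))) / (sin (pi * t) / (pi * t)) = cos (pi * t)"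
    using sin_double[of "pi*t"] sin t by (simp add: mult_ac field_simps)
  also have "(\<lambda>N. P (2*N) / Q N) = (\<lambda>N. \<Prod>m<N. 1 - (2*t / real (2*m+1))^2)"
  proof
    fix N
    show "P (2*N) / Q N = (\<Prod>m<N. 1 - (2*t / real (2*m+1))^2)"
      using prod_sin_factors_odd_split[of t N] Q[of N] unfolding P_def Q_def by (simp add: field_simps)
  qed
  finally show ?thesis .
qed

lemma ln_cos_pi_sums:
  fixes t :: real
  assumes t: "\<bar>t\<bar> < 1/2"
  shows "(\<lambda>m. ln (1 - (2*t / real (2*m+1))^2)) sums ln (cos (pi*t))"
proof (cases "t = 0")
  case False
  have pos: "0 < 1 - (2*t / real (2*m+1))^2" for m
  proof -
    have "\<bar>2*t / real (2*m+1)\<bar> < 1" using t by (simp add: abs_divide field_simps)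
    then show ?thesis by (simp add: abs_square_less_1)
  qed
  have "sin (pi*t) \<noteq> 0"
  proof
    assume "sin (pi*t) = 0"
    then obtain n :: int where "t = of_int n" by (auto simp: sin_zero_iff_int2)
    with t False show False by (cases "n = 0") auto
  qed
  moreover have "cos (pi*t) > 0"
  proof (rule cos_gt_zero_pi)
    have "pi * \<bar>t\<bar> < pi * (1/2)" using t by (intro mult_strict_left_mono) auto
    then have "\<bar>pi*t\<bar> < pi/2" by (simp add: abs_mult)
    then show "- (pi/2) < pi*t" "pi*t < pi/2" using abs_less_iff[of "pi*t" "pi/2"] by linarith+
  qed
  ultimately have "(\<lambda>N. ln (\<Prod>m<N. 1 - (2*t / real (2*m+1))^2)) \<longlonglongrightarrow> ln (cos (pi*t))"
    by (intro tendsto_ln cos_pi_product_tendsto) auto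
  then show ?thesis
    using pos by (simp add: sums_def ln_prod less_imp_neq[symmetric])
qed simp

section \<open>The defining series as a moment integral of ln cos\<close>

definition logP :: "nat \<Rightarrow> real \<Rightarrow> real" where
  "logP r y = ln (1 - y) + (\<Sum>j=1..r. y^j / real j)"

lemma LogP_of_real:
  assumes y: "y < 1"
  shows "LogP r (complex_of_real y) = complex_of_real (logP r y)"
proof -
  have "Ln (1 - complex_of_real y) = Ln (complex_of_real (1 - y))" by simp
  also have "\<dots> = complex_of_real (ln (1 - y))" using y by (intro Ln_of_real) simp
  finally show ?thesis unfolding LogP_def logP_def by simp
qed

lemma logP_0 [simp]: "logP r 0 = 0"
  by (auto simp: logP_def intro!: sum.neutral)

lemma logP_deriv:
  assumes y: "y < 1"
  shows "(logP r has_real_derivative (- (y^r) / (1 - y))) (at y)"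
proof -
  have d: "((\<lambda>y. ln (1 - y) + (\<Sum>j=1..r. y^j / real j)) has_real_derivative
          (- 1 / (1 - y) + (\<Sum>j=1..r. y^(j-1)))) (at y)"
    using y by (auto intro!: derivative_eq_intros sum.cong simp: field_simps)
  have "(\<Sum>j=1..r. y^(j-1)) = (\<Sum>i<r. y^i)"
    by (rule sum.reindex_bij_witness[of _ "\<lambda>i. i+1" "\<lambda>j. j-1"]) auto
  also have "\<dots> = (1 - y^r) / (1 - y)" using y by (simp add: sum_gp_strict)
  finally have S: "(\<Sum>j=1..r. y^(j-1)) = (1 - y^r) / (1 - y)" .
  have "- 1 / (1 - y) + (1 - y^r) / (1 - y) = (- 1 + (1 - y^r)) / (1 - y)"
    by (rule add_divide_distrib[symmetric])
  also have "\<dots> = - (y^r) / (1 - y)" by simp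
  finally have "- 1 / (1 - y) + (\<Sum>j=1..r. y^(j-1)) = - (y^r) / (1 - y)" using S by simp
  with d show ?thesis unfolding logP_def[abs_def] by simp
qed

(* The term n = 2m+1 of the series for logC (p+2) x; indexing by p = r - 2 avoids truncated subtraction. *)
definition logC_term :: "nat \<Rightarrow> real \<Rightarrow> real \<Rightarrow> real" where
  "logC_term p n x = (n/2)^(p+1) * (logP (p+2) (2*x/n) + (-1)^(p+1) * logP (p+2) (-2*x/n))"

lemma logC_term_0 [simp]: "logC_term p n 0 = 0"
  by (simp add: logC_term_def)

lemma logC_term_deriv_eq:
  fixes n t :: real and p :: nat
  assumes n: "n > 0" and yd: "y = 2*t/n" and y1: "\<bar>y\<bar> < 1"
  shows "(n/2)^(p+1) * ((- (y^(p+2)) / (1 - y)) * (2/n) + (-1)^(p+1) * ((- ((-y)^(p+2)) / (1 - (-y))) * (-2/n)))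
       = t^(p+1) * ((1 / (1 - y^2)) * (- (2*y*(2/n))))"
proof -
  have "y^2 < 1" using y1 by (simp add: abs_square_less_1)
  hence ym: "1 - y \<noteq> 0" "1 + y \<noteq> 0" "1 - y^2 \<noteq> 0" using y1 by (auto simp: abs_less_iff)
  have tp: "(n/2)^p * y^p = t^p" using n by (simp add: power_mult_distrib[symmetric] yd)
  have np: "(n/2)^(p+1) * (2/n) = (n/2)^p" using n by simp
  have s: "(-1::real)^(p+1) * (-y)^(p+2) = - (y^(p+2))"
    by (simp add: power_minus' power_add)
  have "(n/2)^(p+1) * ((- (y^(p+2)) / (1 - y)) * (2/n) + (-1)^(p+1) * ((- ((-y)^(p+2)) / (1 - (-y))) * (-2/n)))
      = (n/2)^(p+1) * (2/n) * (- (y^(p+2)) / (1 - y) + ((-1)^(p+1) * (-y)^(p+2)) / (1 + y))"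
  proof -
    have "\<And>c A B s. c * (A * (2/n) + s * (- B / (1 - (-y)) * (-2/n))) = c * (2/n) * (A + (s * B) / (1 + y))"
      by (simp add: algebra_simps)
    thus ?thesis by (simp only: minus_divide_left)
  qed
  also have "\<dots> = (n/2)^p * y^p * (- (y^2) / (1 - y) - y^2 / (1 + y))"
    unfolding np s by (simp add: power_add field_simps power2_eq_square)
  also have "\<dots> = t^p * (- 2 * y^2 / (1 - y^2))"
    unfolding tp using ym by (simp add: field_simps power2_eq_square)
  also have "\<dots> = t^(p+1) * ((1 / (1 - y^2)) * (- (2*y*(2/n))))"
    using ym n by (simp add: yd field_simps power2_eq_square)
  finally show ?thesis .
qed

lemma logC_term_deriv:
  fixes n t :: real
  assumes n: "n > 0" and t1: "\<bar>2*t/n\<bar> < 1"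
  shows "(logC_term p n has_real_derivative t^(p+1) * ((1 / (1 - (2*t/n)^2)) * (- (2*(2*t/n)*(2/n))))) (at t)"
proof -
  define y where "y = 2*t/n"
  have y1: "y < 1" "-y < 1" using t1[unfolded abs_less_iff] by (auto simp: y_def)
  have d1: "((\<lambda>t. logP (p+2) (2*t/n)) has_real_derivative (- (y^(p+2)) / (1 - y)) * (2/n)) (at t)"
  proof -
    have "((\<lambda>t. 2*t/n) has_real_derivative 2/n) (at t)" using n by (auto intro!: derivative_eq_intros)
    moreover have y1': "2*t/n < 1" using y1 by (simp add: y_def)
    ultimately show ?thesis using DERIV_chain2[where g="\<lambda>t. 2*t/n" and x=t, OF logP_deriv[OF y1', of "p+2"]] unfolding y_def by blast
  qed
  have d2: "((\<lambda>t. logP (p+2) (-2*t/n)) has_real_derivative (- ((-y)^(p+2)) / (1 - (-y))) * (-2/n)) (at t)"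
  proof -
    have "((\<lambda>t. -2*t/n) has_real_derivative -2/n) (at t)" using n by (auto intro!: derivative_eq_intros)
    moreover have m: "-y = -2*t/n" by (simp add: y_def)
    moreover have y2': "-2*t/n < 1" using y1 by (simp add: y_def)
    ultimately show ?thesis unfolding m using DERIV_chain2[where g="\<lambda>t. -2*t/n" and x=t, OF logP_deriv[OF y2', of "p+2"]] by blast
  qed
  have "(logC_term p n has_real_derivative (n/2)^(p+1) * ((- (y^(p+2)) / (1 - y)) * (2/n) + (-1)^(p+1) * ((- ((-y)^(p+2)) / (1 - (-y))) * (-2/n)))) (at t)"
    unfolding logC_term_def[abs_def] by (intro DERIV_cmult DERIV_add d1 d2)
  also have "(n/2)^(p+1) * ((- (y^(p+2)) / (1 - y)) * (2/n) + (-1)^(p+1) * ((- ((-y)^(p+2)) / (1 - (-y))) * (-2/n)))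
       = t^(p+1) * ((1 / (1 - y^2)) * (- (2*y*(2/n))))"
  proof -
    have "\<bar>y\<bar> < 1" using t1 by (simp add: y_def)
    thus ?thesis by (rule logC_term_deriv_eq[OF n y_def])
  qed
  finally show ?thesis by (simp add: y_def)
qed

definition ln_odd_factor :: "real \<Rightarrow> real \<Rightarrow> real" where
  "ln_odd_factor n t = ln (1 - (2*t/n)^2)"

lemma ln_odd_factor_0 [simp]: "ln_odd_factor n 0 = 0"
  by (simp add: ln_odd_factor_def)

lemma ln_odd_factor_deriv:
  fixes n t :: real
  assumes n: "n > 0" and t1: "\<bar>2*t/n\<bar> < 1"
  shows "(ln_odd_factor n has_real_derivative (1 / (1 - (2*t/n)^2)) * (- (2*(2*t/n)*(2/n)))) (at t)"
proof -
  have "(2*t/n)^2 < 1" using t1 by (simp add: abs_square_less_1)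
  hence g0: "0 < 1 - (2*t/n)^2" by simp
  have dg: "((\<lambda>u. 1 - (2*u/n)^2) has_real_derivative - (2*(2*t/n)*(2/n))) (at t)"
    using n by (auto intro!: derivative_eq_intros)
  have "((\<lambda>u. ln (1 - (2*u/n)^2)) has_real_derivative inverse (1 - (2*t/n)^2) * (- (2*(2*t/n)*(2/n)))) (at t)"
    by (rule DERIV_chain2[OF DERIV_ln[OF g0] dg])
  thus ?thesis unfolding ln_odd_factor_def[abs_def] by (simp add: inverse_eq_divide)
qed

lemma has_integral_moment_ln_odd_factor:
  fixes n x :: real
  assumes n: "n \<ge> 1" and x: "0 \<le> x" "x \<le> 1/4"
  shows "((\<lambda>t. t^p * ln_odd_factor n t) has_integral (x^(p+1) * ln_odd_factor n x - logC_term p n x) / real (p+1)) {0..x}"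
proof -
  define F where "F t = (t^(p+1) * ln_odd_factor n t - logC_term p n t) / real (p+1)" for t
  have "((\<lambda>t. t^p * ln_odd_factor n t) has_integral (F x - F 0)) {0..x}"
  proof (rule fundamental_theorem_of_calculus[OF x(1)])
    fix t assume t: "t \<in> {0..x}"
    have t1: "\<bar>2*t/n\<bar> < 1" using t x n by (auto simp: abs_divide field_simps)
    define H where "H = (1 / (1 - (2*t/n)^2)) * (- (2*(2*t/n)*(2/n)))"
    have dp: "((\<lambda>t. t^(p+1)) has_real_derivative real (p+1) * t^p) (at t)"
      using DERIV_pow[of "p+1" t UNIV] by simp
    have dh: "(ln_odd_factor n has_real_derivative H) (at t)" unfolding H_def using n t1 by (intro ln_odd_factor_deriv) auto
    have dT: "(logC_term p n has_real_derivative t^(p+1) * H) (at t)" unfolding H_def using n t1 by (intro logC_term_deriv) auto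
    have "(F has_real_derivative ((t^(p+1) * H + real (p+1) * t^p * ln_odd_factor n t) - t^(p+1) * H) / real (p+1)) (at t)"
      unfolding F_def[abs_def]
      by (intro DERIV_cdivide DERIV_diff DERIV_mult' dp dh dT)
    hence "(F has_real_derivative t^p * ln_odd_factor n t) (at t)"
      by (rule DERIV_cong) (simp add: field_simps)
    thus "(F has_vector_derivative t^p * ln_odd_factor n t) (at t within {0..x})"
      by (simp add: has_real_derivative_iff_has_vector_derivative has_vector_derivative_at_within)
  qed
  thus ?thesis by (simp add: F_def)
qed

lemma moment_ln_odd_factor_bound:
  fixes t :: real
  assumes t: "0 \<le> t" "t \<le> 1/4"
  shows "\<bar>t^p * ln_odd_factor (real (2*m+1)) t\<bar> \<le> inverse (real (Suc m) ^ 2)"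
proof -
  define u where "u = (2*t/real (2*m+1))^2"
  have q0: "0 \<le> 2*t/real (2*m+1)" using t by simp
  have q1: "2*t/real (2*m+1) \<le> 1 / (2 * real (Suc m))"
  proof -
    have "2*t \<le> 1/2" using t by simp
    moreover have "real (Suc m) \<le> real (2*m+1)" by simp
    ultimately have "2*t/real (2*m+1) \<le> (1/2) / real (Suc m)"
      using q0 by (intro frac_le) auto
    thus ?thesis by simp
  qed
  have u0: "0 \<le> u" by (simp add: u_def)
  have u1: "u \<le> (1 / (2 * real (Suc m)))^2" unfolding u_def using q0 q1 by (intro power_mono) auto
  have u2: "(1 / (2 * real (Suc m)))^2 = inverse (real (Suc m) ^ 2) / 4"
    by (simp add: power2_eq_square field_simps)
  have ui: "inverse (real (Suc m) ^ 2) \<le> 1" by (simp add: inverse_le_1_iff)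
  have uh: "u \<le> 1/2" using u1 u2 ui by linarith
  have lo: "- u - 2 * u^2 \<le> ln (1 - u)" by (rule ln_one_minus_pos_lower_bound[OF u0 uh])
  have hi: "ln (1 - u) \<le> 0" using u0 uh by simp
  have "u^2 \<le> u * (1/4)" unfolding power2_eq_square using u0 u1 u2 ui by (intro mult_left_mono) auto
  hence "\<bar>ln (1 - u)\<bar> \<le> 3/2 * u" using lo hi by linarith
  also have "\<dots> \<le> inverse (real (Suc m) ^ 2)" using u1 u2 by (simp add: field_simps)
  finally have h: "\<bar>ln_odd_factor (real (2*m+1)) t\<bar> \<le> inverse (real (Suc m) ^ 2)" by (simp add: ln_odd_factor_def u_def)
  have "\<bar>t^p\<bar> \<le> 1" using t by (simp add: power_abs power_le_one)
  hence "\<bar>t^p\<bar> * \<bar>ln_odd_factor (real (2*m+1)) t\<bar> \<le> 1 * inverse (real (Suc m) ^ 2)"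
    using h by (intro mult_mono) auto
  thus ?thesis by (simp add: abs_mult)
qed

lemma integral_moment_ln_odd_factor_sums:
  "(\<lambda>m. integral {0..1/4} (\<lambda>t. t^p * ln_odd_factor (real (2*m+1)) t)) sums integral {0..1/4} (\<lambda>t. t^p * ln (cos (pi*t)))"
proof (rule sums_integral_Weierstrass[where M="\<lambda>m. inverse (real (Suc m) ^ 2)"])
  fix m :: nat
  show "continuous_on {0..1/4} (\<lambda>t. t^p * ln_odd_factor (real (2*m+1)) t)"
    unfolding ln_odd_factor_def
  proof (intro continuous_intros ballI)
    fix t :: real assume t: "t \<in> {0..1/4}"
    have "(2*t/real (2*m+1))^2 < 1"
    proof -
      have "\<bar>2*t/real (2*m+1)\<bar> < 1" using t by (simp add: abs_divide field_simps)
      thus ?thesis by (simp add: abs_square_less_1)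
    qed
    thus "1 - (2*t/real (2*m+1))^2 \<noteq> 0" by simp
  qed auto
next
  show "summable (\<lambda>m. inverse (real (Suc m) ^ 2))"
    using inverse_power_summable[of 2, where 'a=real] by (subst summable_Suc_iff) simp
next
  fix m and t :: real assume "t \<in> {0..1/4}"
  thus "\<bar>t^p * ln_odd_factor (real (2*m+1)) t\<bar> \<le> inverse (real (Suc m) ^ 2)" by (intro moment_ln_odd_factor_bound) auto
next
  fix t :: real assume t: "t \<in> {0..1/4}"
  have "(\<lambda>m. ln (1 - (2*t / real (2*m+1))^2)) sums ln (cos (pi*t))"
    using t by (intro ln_cos_pi_sums) auto
  from sums_mult[OF this, of "t^p"]
  show "(\<lambda>m. t^p * ln_odd_factor (real (2*m+1)) t) sums (t^p * ln (cos (pi*t)))" by (simp add: ln_odd_factor_def)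
qed

lemma logC_term_sums:
  "(\<lambda>m. logC_term p (real (2*m+1)) (1/4)) sums
     ((1/4)^(p+1) * ln (cos (pi/4)) - real (p+1) * integral {0..1/4} (\<lambda>t. t^p * ln (cos (pi*t))))"
proof -
  have e: "logC_term p (real (2*m+1)) (1/4) = (1/4)^(p+1) * ln_odd_factor (real (2*m+1)) (1/4) -
              real (p+1) * integral {0..1/4} (\<lambda>t. t^p * ln_odd_factor (real (2*m+1)) t)" for m
  proof -
    have ieq: "integral {0..1/4} (\<lambda>t. t^p * ln_odd_factor (real (2*m+1)) t) =
          ((1/4)^(p+1) * ln_odd_factor (real (2*m+1)) (1/4) - logC_term p (real (2*m+1)) (1/4)) / real (p+1)"
      by (rule integral_unique[OF has_integral_moment_ln_odd_factor]) auto
    have sol: "\<And>(c::real) I A T. c \<noteq> 0 \<Longrightarrow> I = (A - T) / c \<Longrightarrow> T = A - c * I"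
      by (simp add: field_simps)
    have c: "real (p+1) \<noteq> 0" by simp
    show ?thesis by (rule sol[OF c ieq])
  qed
  have "(\<lambda>m. ln (1 - (2*(1/4) / real (2*m+1))^2)) sums ln (cos (pi*(1/4)))"
    by (intro ln_cos_pi_sums) simp
  hence s1: "(\<lambda>m. ln_odd_factor (real (2*m+1)) (1/4)) sums ln (cos (pi/4))" by (simp add: ln_odd_factor_def)
  have "(\<lambda>m. (1/4)^(p+1) * ln_odd_factor (real (2*m+1)) (1/4) -
              real (p+1) * integral {0..1/4} (\<lambda>t. t^p * ln_odd_factor (real (2*m+1)) t)) sums
     ((1/4)^(p+1) * ln (cos (pi/4)) - real (p+1) * integral {0..1/4} (\<lambda>t. t^p * ln (cos (pi*t))))"
    by (intro sums_diff sums_mult s1 integral_moment_ln_odd_factor_sums)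
  thus ?thesis unfolding e .
qed

lemma logC_quarter_eq_integral:
  "logC (p+2) (1/4) = complex_of_real ((1/4)^(p+1) * ln (cos (pi/4)) - real (p+1) * integral {0..1/4} (\<lambda>t. t^p * ln (cos (pi*t))))"
proof -
  have tm: "(of_nat (2*m+1) / 2)^(p+2-1) * (LogP (p+2) (2 * (1/4) / of_nat (2*m+1)) + (-1)^(p+2-1) * LogP (p+2) (- 2 * (1/4) / of_nat (2*m+1)))
      = complex_of_real (logC_term p (real (2*m+1)) (1/4))" for m
  proof -
    have y1: "(2 * (1/4) / of_nat (2*m+1) :: complex) = complex_of_real (2*(1/4)/real (2*m+1))" by simp
    have y2: "(- 2 * (1/4) / of_nat (2*m+1) :: complex) = complex_of_real (-2*(1/4)/real (2*m+1))" by simp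
    have l1: "2*(1/4)/real (2*m+1) < (1::real)" by (simp add: field_simps)
    have l2: "-2*(1/4)/real (2*m+1) < (1::real)" by (simp add: field_simps)
    have c: "(of_nat (2*m+1) / 2 :: complex)^(p+2-1) = complex_of_real ((real (2*m+1)/2)^(p+1))" by simp
    have s: "(-1::complex)^(p+2-1) = complex_of_real ((-1)^(p+1))" by simp
    show ?thesis unfolding y1 y2 LogP_of_real[OF l1] LogP_of_real[OF l2] c s logC_term_def by simp
  qed
  have "(\<lambda>m. complex_of_real (logC_term p (real (2*m+1)) (1/4))) sums
     complex_of_real ((1/4)^(p+1) * ln (cos (pi/4)) - real (p+1) * integral {0..1/4} (\<lambda>t. t^p * ln (cos (pi*t))))"
    by (rule sums_of_real[OF logC_term_sums])
  hence "(\<Sum>m. complex_of_real (logC_term p (real (2*m+1)) (1/4))) =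
     complex_of_real ((1/4)^(p+1) * ln (cos (pi/4)) - real (p+1) * integral {0..1/4} (\<lambda>t. t^p * ln (cos (pi*t))))"
    by (rule sums_unique[symmetric])
  thus ?thesis unfolding logC_def by (simp only: tm)
qed

section \<open>Moments of the cosine\<close>

fun moment_exp_primitive :: "nat \<Rightarrow> complex \<Rightarrow> complex \<Rightarrow> complex" where
  "moment_exp_primitive 0 w z = exp (w * z) / w"
| "moment_exp_primitive (Suc p) w z = (z^(Suc p) * exp (w * z) - of_nat (Suc p) * moment_exp_primitive p w z) / w"

lemma moment_exp_primitive_deriv:
  assumes w: "w \<noteq> 0"
  shows "(moment_exp_primitive p w has_field_derivative z^p * exp (w * z)) (at z)"
proof (induction p)
  case 0
  have "((\<lambda>z. exp (w * z) / w) has_field_derivative (exp (w * z) * w) / w) (at z)"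
    by (auto intro!: derivative_eq_intros)
  then show ?case using w by (simp add: moment_exp_primitive.simps(1)[abs_def])
next
  case (Suc p)
  have "((\<lambda>z. (z^(Suc p) * exp (w * z) - of_nat (Suc p) * moment_exp_primitive p w z) / w) has_field_derivative
        ((z^(Suc p) * (exp (w * z) * w) + (of_nat (Suc p) * z^p) * exp (w * z)) - of_nat (Suc p) * (z^p * exp (w * z))) / w) (at z)"
  proof -
    have dp: "((\<lambda>z. z^(Suc p)) has_field_derivative of_nat (Suc p) * z^p) (at z)"
      using DERIV_power[OF DERIV_ident, where n="Suc p" and x=z and s=UNIV] by simp
    have de: "((\<lambda>z. exp (w * z)) has_field_derivative exp (w * z) * w) (at z)"
      by (auto intro!: derivative_eq_intros)
    show ?thesis by (intro DERIV_cdivide DERIV_diff DERIV_mult' DERIV_cmult Suc dp de)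
  qed
  moreover have "((z^(Suc p) * (exp (w * z) * w) + (of_nat (Suc p) * z^p) * exp (w * z)) - of_nat (Suc p) * (z^p * exp (w * z))) / w
     = z^(Suc p) * exp (w * z)"
    using w by (simp add: field_simps)
  ultimately show ?case by (simp add: moment_exp_primitive.simps(2)[abs_def])
qed

lemma moment_exp_primitive_0: assumes w: "w \<noteq> 0" shows "moment_exp_primitive p w 0 = (-1)^p * fact p / w^(p+1)"
  using w by (induction p) (auto simp: field_simps)

lemma moment_exp_primitive_eq:
  assumes w: "w \<noteq> 0"
  shows "moment_exp_primitive p w z = exp (w * z) * (\<Sum>j\<le>p. (-1)^j * (fact p / fact (p - j)) * z^(p-j) / w^(j+1))"
proof (induction p)
  case 0 then show ?case by simp
next
  case (Suc p)
  have np: "1 + complex_of_nat p \<noteq> 0" by (metis of_nat_Suc of_nat_neq_0)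
  have "(\<Sum>j\<le>Suc p. (-1)^j * (fact (Suc p) / fact (Suc p - j)) * z^(Suc p-j) / w^(j+1))
      = z^(Suc p) / w + (\<Sum>j\<le>p. (-1)^(Suc j) * (fact (Suc p) / fact (p - j)) * z^(p-j) / w^(j+2))"
    using np by (subst sum.atMost_Suc_shift) simp
  also have "(\<Sum>j\<le>p. (-1)^(Suc j) * (fact (Suc p) / fact (p - j)) * z^(p-j) / w^(j+2))
     = - (of_nat (Suc p) / w) * (\<Sum>j\<le>p. (-1)^j * (fact p / fact (p - j)) * z^(p-j) / w^(j+1))"
    unfolding sum_distrib_left using w np by (intro sum.cong refl) (simp add: fact_Suc field_simps)
  finally have eq: "(\<Sum>j\<le>Suc p. (-1)^j * (fact (Suc p) / fact (Suc p - j)) * z^(Suc p-j) / w^(j+1)) =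
     z^(Suc p) / w - (of_nat (Suc p) / w) * (\<Sum>j\<le>p. (-1)^j * (fact p / fact (p - j)) * z^(p-j) / w^(j+1))" by simp
  show ?case unfolding eq moment_exp_primitive.simps(2) Suc by (simp add: algebra_simps diff_divide_distrib)
qed

lemma norm_exp_imaginary: "Re w = 0 \<Longrightarrow> cmod (exp (w * complex_of_real x)) = 1"
  by (simp add: norm_exp_eq_Re)

lemma moment_exp_primitive_bound:
  "\<exists>C\<ge>0. \<forall>w (x::real). Re w = 0 \<longrightarrow> 1 \<le> cmod w \<longrightarrow> 0 \<le> x \<longrightarrow> x \<le> 1 \<longrightarrow>
      cmod (moment_exp_primitive p w (complex_of_real x)) \<le> C / cmod w"
proof (induction p)
  case 0
  show ?case by (rule exI[of _ 1]) (auto simp: norm_divide norm_exp_imaginary)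
next
  case (Suc p)
  then obtain C where C: "C \<ge> 0" "\<And>w (x::real). Re w = 0 \<Longrightarrow> 1 \<le> cmod w \<Longrightarrow> 0 \<le> x \<Longrightarrow> x \<le> 1 \<Longrightarrow>
      cmod (moment_exp_primitive p w (complex_of_real x)) \<le> C / cmod w" by blast
  show ?case
  proof (rule exI[of _ "1 + real (Suc p) * C"], safe)
    show "0 \<le> 1 + real (Suc p) * C" using C by simp
    fix w and x :: real assume w: "Re w = 0" "1 \<le> cmod w" and x: "0 \<le> x" "x \<le> 1"
    have "cmod (moment_exp_primitive (Suc p) w (complex_of_real x)) =
          cmod (complex_of_real x ^ Suc p * exp (w * complex_of_real x) - of_nat (Suc p) * moment_exp_primitive p w (complex_of_real x)) / cmod w"
      by (simp add: norm_divide)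
    also have "cmod (complex_of_real x ^ Suc p * exp (w * complex_of_real x) - of_nat (Suc p) * moment_exp_primitive p w (complex_of_real x))
       \<le> cmod (complex_of_real x ^ Suc p * exp (w * complex_of_real x)) + cmod (of_nat (Suc p) * moment_exp_primitive p w (complex_of_real x))"
      by (rule norm_triangle_ineq4)
    also have "cmod (complex_of_real x ^ Suc p * exp (w * complex_of_real x)) = x ^ Suc p"
      using x w by (simp add: norm_mult norm_power norm_exp_imaginary)
    also have "x ^ Suc p \<le> 1" using x by (intro power_le_one)
    also have "cmod (of_nat (Suc p) * moment_exp_primitive p w (complex_of_real x)) \<le> real (Suc p) * (C / cmod w)"
    proof -
      have "cmod (of_nat (Suc p) * moment_exp_primitive p w (complex_of_real x)) = real (Suc p) * cmod (moment_exp_primitive p w (complex_of_real x))"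
        by (simp only: norm_mult norm_of_nat)
      also have "\<dots> \<le> real (Suc p) * (C / cmod w)" using C(2)[OF w x] by (rule mult_left_mono) simp
      finally show ?thesis .
    qed
    also have "C / cmod w \<le> C"
    proof -
      have "C * 1 \<le> C * cmod w" using C(1) w(2) by (intro mult_left_mono) auto
      moreover have "cmod w > 0" using w(2) by linarith
      ultimately show ?thesis by (simp add: divide_le_eq)
    qed
    finally show "cmod (moment_exp_primitive (Suc p) w (complex_of_real x)) \<le> (1 + real (Suc p) * C) / cmod w"
      using w by (auto simp: divide_right_mono)
  qed
qed

definition cos_moment :: "nat \<Rightarrow> nat \<Rightarrow> real" where
  "cos_moment p k = integral {0..1/4} (\<lambda>t. t^p * cos (2*pi*real k*t))"

lemma cos_moment_has_integral:
  assumes k: "k \<ge> 1"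
  defines "w \<equiv> \<i> * complex_of_real (2*pi*real k)"
  shows "((\<lambda>t. t^p * cos (2*pi*real k*t)) has_integral Re (moment_exp_primitive p w (1/4) - moment_exp_primitive p w 0)) {0..1/4}"
proof -
  have w0: "w \<noteq> 0" using k by (simp add: w_def)
  have "((\<lambda>t. (complex_of_real t)^p * exp (w * complex_of_real t)) has_integral
          (moment_exp_primitive p w (complex_of_real (1/4)) - moment_exp_primitive p w (complex_of_real 0))) {0..1/4}"
    by (rule fundamental_theorem_of_calculus) (auto intro!: has_vector_derivative_real_field moment_exp_primitive_deriv w0)
  from has_integral_linear[OF this bounded_linear_Re]
  have H: "((\<lambda>t. Re ((complex_of_real t)^p * exp (w * complex_of_real t))) has_integral
          Re (moment_exp_primitive p w (1/4) - moment_exp_primitive p w 0)) {0..1/4}" by (simp only: o_def) simp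
  moreover have "(\<lambda>t. Re ((complex_of_real t)^p * exp (w * complex_of_real t))) = (\<lambda>t. t^p * cos (2*pi*real k*t))"
  proof (rule ext)
    fix t
    have "(complex_of_real t)^p = complex_of_real (t^p)" by simp
    moreover have "Re (exp (w * complex_of_real t)) = cos (2*pi*real k*t)"
      by (simp add: w_def Re_exp)
    moreover have "Re (complex_of_real a * z) = a * Re z" for a z by simp
    ultimately show "Re ((complex_of_real t)^p * exp (w * complex_of_real t)) = t^p * cos (2*pi*real k*t)" by metis
  qed
  ultimately show ?thesis by (simp only:)
qed

lemma cos_moment_eq:
  assumes k: "k \<ge> 1"
  shows "cos_moment p k = Re (moment_exp_primitive p (\<i> * complex_of_real (2*pi*real k)) (1/4) - moment_exp_primitive p (\<i> * complex_of_real (2*pi*real k)) 0)"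
  unfolding cos_moment_def using cos_moment_has_integral[OF k, of p] by (rule integral_unique)

lemma cos_moment_bound: "\<exists>C\<ge>0. \<forall>k\<ge>1. \<bar>cos_moment p k\<bar> \<le> C / real k"
proof -
  obtain C where C: "C \<ge> 0" "\<And>w (x::real). Re w = 0 \<Longrightarrow> 1 \<le> cmod w \<Longrightarrow> 0 \<le> x \<Longrightarrow> x \<le> 1 \<Longrightarrow>
      cmod (moment_exp_primitive p w (complex_of_real x)) \<le> C / cmod w"
    using moment_exp_primitive_bound[of p] by blast
  show ?thesis
  proof (rule exI[of _ C], safe)
    show "0 \<le> C" by fact
    fix k :: nat assume k: "k \<ge> 1"
    define w where "w = \<i> * complex_of_real (2*pi*real k)"
    have wn: "cmod w = 2*pi*real k" by (simp add: w_def norm_mult)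
    have w1: "1 \<le> cmod w" unfolding wn using k pi_gt3 by (simp add: mult_ge1_I less_imp_le)
    have wr: "Re w = 0" by (simp add: w_def)
    have "\<bar>cos_moment p k\<bar> = \<bar>Re (moment_exp_primitive p w (complex_of_real (1/4)) - moment_exp_primitive p w (complex_of_real 0))\<bar>"
      using cos_moment_eq[OF k, of p] by (simp add: w_def)
    also have "\<dots> \<le> cmod (moment_exp_primitive p w (complex_of_real (1/4)) - moment_exp_primitive p w (complex_of_real 0))" by (rule abs_Re_le_cmod)
    also have "\<dots> \<le> cmod (moment_exp_primitive p w (complex_of_real (1/4))) + cmod (moment_exp_primitive p w (complex_of_real 0))" by (rule norm_triangle_ineq4)
    also have "\<dots> \<le> C / cmod w + C / cmod w" using C(2)[OF wr w1, of "1/4"] C(2)[OF wr w1, of 0] by (intro add_mono) auto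
    also have "\<dots> = C / (pi * real k)" unfolding wn by (simp add: field_simps)
    also have "\<dots> \<le> C / real k" using C(1) k pi_gt3
      by (intro divide_left_mono) (auto intro: mult_pos_pos)
    finally show "\<bar>cos_moment p k\<bar> \<le> C / real k" .
  qed
qed

section \<open>The Fourier series of ln (2 cos (pi t))\<close>

lemma abs_ln_diff_le:
  fixes x y :: real
  assumes "1 \<le> x" "1 \<le> y"
  shows "\<bar>ln x - ln y\<bar> \<le> \<bar>x - y\<bar>"
proof -
  have *: "ln a - ln b \<le> a - b" if "1 \<le> a" "1 \<le> b" "b \<le> a" for a b :: real
  proof -
    have "ln a - ln b = ln (a / b)" using that by (simp add: ln_div)
    also have "\<dots> \<le> a / b - 1" using that by (intro ln_le_minus_one) simp
    also have "\<dots> = (a - b) / b" using that by (simp add: field_simps)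
    also have "\<dots> \<le> a - b" using that by (simp add: divide_le_eq) (simp add: mult_le_cancel_left1 mult_left_mono[of 1 b "a-b", simplified])
    finally show ?thesis .
  qed
  show ?thesis
  proof (cases "y \<le> x")
    case True
    thus ?thesis using *[of x y] assms ln_le_cancel_iff[of y x] by (simp add: abs_if)
  next
    case False
    thus ?thesis using *[of y x] assms ln_le_cancel_iff[of x y] by (simp add: abs_if)
  qed
qed

lemma norm_one_plus_cis_ge_1:
  fixes s t :: real
  assumes "0 \<le> s" "0 \<le> t" "t \<le> 1/4"
  shows "1 \<le> cmod (1 + complex_of_real s * cis (2*pi*t))"
proof -
  have "2*pi*t \<le> 2*pi*(1/4)" using assms by (intro mult_left_mono) auto
  moreover have "0 \<le> 2*pi*t" using assms by simp
  moreover have "-(pi/2) \<le> 2*pi*t" using \<open>0 \<le> 2*pi*t\<close> pi_gt_zero by linarith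
  ultimately have "0 \<le> cos (2*pi*t)" by (intro cos_ge_zero) auto
  hence "1 \<le> Re (1 + complex_of_real s * cis (2*pi*t))" using assms by simp
  also have "\<dots> \<le> cmod (1 + complex_of_real s * cis (2*pi*t))" by (rule complex_Re_le_cmod)
  finally show ?thesis .
qed

lemma norm_one_plus_cis_eq:
  fixes t :: real assumes t: "0 \<le> t" "t \<le> 1/4"
  shows "cmod (1 + complex_of_real 1 * cis (2*pi*t)) = 2 * cos (pi*t)"
proof -
  define x where "x = pi*t"
  have e: "2*pi*t = 2*x" by (simp add: x_def)
  have "1 + complex_of_real 1 * cis (2*x) = complex_of_real (2 * cos x) * cis x"
    using cos_double_cos[of x] sin_double[of x] by (simp add: complex_eq_iff power2_eq_square mult_ac)
  hence "1 + complex_of_real 1 * cis (2*pi*t) = complex_of_real (2 * cos x) * cis x" by (simp only: e)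
  hence "cmod (1 + complex_of_real 1 * cis (2*pi*t)) = \<bar>2 * cos x\<bar>" by (simp add: norm_mult)
  moreover have "cos x \<ge> 0"
  proof -
    have "pi*t \<le> pi*(1/4)" using t by (intro mult_left_mono) auto
    moreover have "0 \<le> pi*t" using t by simp
    moreover have "pi*(1/4) \<le> pi/2" using pi_gt_zero by simp
    moreover have "-(pi/2) \<le> 0" using pi_gt_zero by simp
    ultimately show ?thesis unfolding x_def by (intro cos_ge_zero) linarith+
  qed
  ultimately show ?thesis by (simp add: x_def)
qed

lemma ln_norm_one_plus_cis_sums:
  fixes s t :: real
  assumes s: "0 \<le> s" "s < 1"
  shows "(\<lambda>k. (-1)^(k+1) / real k * s^k * cos (2*pi*real k*t)) sums ln (cmod (1 + complex_of_real s * cis (2*pi*t)))"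
proof -
  define z where "z = complex_of_real s * cis (2*pi*t)"
  have zn: "norm z < 1" using s by (simp add: z_def norm_mult)
  have A: "(\<lambda>n. Re ((-1)^Suc n / of_nat n * z^n)) sums Re (ln (1 + z))"
    by (rule sums_Re[OF Ln_series[OF zn]])
  have B: "Re ((-1)^Suc n / of_nat n * z^n) = (-1)^(n+1) / real n * s^n * cos (2*pi*real n*t)" for n
  proof -
    have "z^n = complex_of_real (s^n) * cis (real n * (2*pi*t))"
      by (simp add: z_def power_mult_distrib Complex.DeMoivre)
    also have "cis (real n * (2*pi*t)) = cis (2*pi*real n*t)" by (simp add: mult_ac)
    finally have e1: "z^n = complex_of_real (s^n) * cis (2*pi*real n*t)" .
    have e2: "(-1)^Suc n / of_nat n = complex_of_real ((-1)^(n+1) / real n)" by simp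
    have "(-1)^Suc n / of_nat n * z^n = complex_of_real ((-1)^(n+1) / real n) * (complex_of_real (s^n) * cis (2*pi*real n*t))"
      by (simp only: e1 e2)
    also have "\<dots> = complex_of_real ((-1)^(n+1) / real n * s^n) * cis (2*pi*real n*t)"
      by (simp only: of_real_mult mult.assoc)
    finally have e3: "(-1)^Suc n / of_nat n * z^n = complex_of_real ((-1)^(n+1) / real n * s^n) * cis (2*pi*real n*t)" .
    have "Re (complex_of_real c * cis x) = c * cos x" for c x by simp
    thus ?thesis by (simp only: e3)
  qed
  have "1 + z \<noteq> 0" using zn
    by (metis add.inverse_unique norm_minus_cancel norm_one order_less_irrefl)
  hence C: "Re (ln (1 + z)) = ln (cmod (1 + z))" by simp
  have B': "(\<lambda>n. Re ((-1)^Suc n / of_nat n * z^n)) = (\<lambda>k. (-1)^(k+1) / real k * s^k * cos (2*pi*real k*t))"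
    using B by auto
  have "(\<lambda>k. (-1)^(k+1) / real k * s^k * cos (2*pi*real k*t)) sums ln (cmod (1 + z))"
    using A unfolding B' C .
  thus ?thesis unfolding z_def .
qed

lemma cos_moment_power_series_sums:
  fixes s :: real
  assumes s: "0 \<le> s" "s < 1"
  shows "(\<lambda>k. (-1)^(k+1) / real k * s^k * cos_moment p k) sums
           integral {0..1/4} (\<lambda>t. t^p * ln (cmod (1 + complex_of_real s * cis (2*pi*t))))"
proof -
  define f where "f k t = ((-1)^(k+1) / real k * s^k) * (t^p * cos (2*pi*real k*t))" for k t
  have "(\<lambda>k. integral {0..1/4} (f k)) sums integral {0..1/4} (\<lambda>t. t^p * ln (cmod (1 + complex_of_real s * cis (2*pi*t))))"
  proof (rule sums_integral_Weierstrass[where M="\<lambda>k. s^k"])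
    show "continuous_on {0..1/4} (f k)" for k unfolding f_def by (intro continuous_intros)
    show "summable (\<lambda>k. s^k)" using s by (intro summable_geometric) simp
    fix k and t :: real assume t: "t \<in> {0..1/4}"
    have "\<bar>(-1)^(k+1) / real k\<bar> \<le> (1::real)" by (cases k) (auto simp: abs_divide)
    moreover have "\<bar>t^p * cos (2*pi*real k*t)\<bar> \<le> 1"
      unfolding abs_mult using t abs_cos_le_one[of "2*pi*real k*t"]
      by (intro mult_le_one) (auto simp: power_abs power_le_one)
    ultimately have "\<bar>(-1)^(k+1) / real k\<bar> * s^k * \<bar>t^p * cos (2*pi*real k*t)\<bar> \<le> 1 * s^k * 1"
      using s by (intro mult_mono) auto
    then show "\<bar>f k t\<bar> \<le> s^k" using s by (simp add: f_def abs_mult power_abs)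
  next
    fix t :: real assume t: "t \<in> {0..1/4}"
    show "(\<lambda>k. f k t) sums (t^p * ln (cmod (1 + complex_of_real s * cis (2*pi*t))))"
      using sums_mult[OF ln_norm_one_plus_cis_sums[OF s, of t], of "t^p"] by (simp add: f_def mult_ac)
  qed
  moreover have "integral {0..1/4} (f k) = (-1)^(k+1) / real k * s^k * cos_moment p k" for k
    unfolding f_def cos_moment_def by (rule integral_mult_right)
  ultimately show ?thesis by simp
qed

lemma cos_moment_power_series_bound:
  obtains C where "\<And>k s. s \<in> {0..1} \<Longrightarrow>
    \<bar>(-1)^(k+1) / real k * s^k * cos_moment p k\<bar> \<le> C * inverse (real k ^ 2)"
proof -
  obtain C where C: "C \<ge> 0" "\<And>k. k \<ge> 1 \<Longrightarrow> \<bar>cos_moment p k\<bar> \<le> C / real k"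
    using cos_moment_bound[of p] by blast
  have "\<bar>(-1)^(k+1) / real k * s^k * cos_moment p k\<bar> \<le> C * inverse (real k ^ 2)"
    if s: "s \<in> {0..1}" for k s
  proof (cases "k = 0")
    case False
    have "\<bar>(-1)^(k+1) / real k * s^k * cos_moment p k\<bar> = (1 / real k) * s^k * \<bar>cos_moment p k\<bar>"
      using s by (simp add: abs_mult abs_divide power_abs)
    also have "\<dots> \<le> (1 / real k) * 1 * (C / real k)"
      using s C(2) False by (intro mult_mono) (auto simp: power_le_one)
    also have "\<dots> = C * inverse (real k ^ 2)" by (simp add: field_simps power2_eq_square)
    finally show ?thesis .
  qed simp
  then show ?thesis by (rule that)
qed

lemma cos_moment_power_series_continuous:
  "continuous_on {0..1} (\<lambda>s. \<Sum>k. (-1)^(k+1) / real k * s^k * cos_moment p k)"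
proof (rule uniform_limit_theorem)
  obtain C where C: "\<And>k s. s \<in> {0..1} \<Longrightarrow>
      \<bar>(-1)^(k+1) / real k * s^k * cos_moment p k\<bar> \<le> C * inverse (real k ^ 2)"
    using cos_moment_power_series_bound[of p] by blast
  have "summable (\<lambda>k. C * inverse (real k ^ 2))"
    by (intro summable_mult inverse_power_summable) simp
  then show "uniform_limit {0..1} (\<lambda>n s. \<Sum>k<n. (-1)^(k+1) / real k * s^k * cos_moment p k)
      (\<lambda>s. \<Sum>k. (-1)^(k+1) / real k * s^k * cos_moment p k) sequentially"
    using C by (intro Weierstrass_m_test[where M="\<lambda>k. C * inverse (real k ^ 2)"]) auto
  show "\<forall>\<^sub>F n in sequentially. continuous_on {0..1} (\<lambda>s. \<Sum>k<n. (-1)^(k+1) / real k * s^k * cos_moment p k)"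
    by (intro always_eventually allI continuous_intros)
qed simp

lemma dist_moment_ln_norm_one_plus_cis:
  fixes x y t :: real
  assumes "0 \<le> x" "0 \<le> y" "t \<in> {0..1/4}"
  shows "dist (t^p * ln (cmod (1 + complex_of_real x * cis (2*pi*t))))
              (t^p * ln (cmod (1 + complex_of_real y * cis (2*pi*t)))) \<le> \<bar>x - y\<bar>"
proof -
  define A where "A = cmod (1 + complex_of_real x * cis (2*pi*t))"
  define B where "B = cmod (1 + complex_of_real y * cis (2*pi*t))"
  have A1: "1 \<le> A" unfolding A_def using assms by (intro norm_one_plus_cis_ge_1) auto
  have B1: "1 \<le> B" unfolding B_def using assms by (intro norm_one_plus_cis_ge_1) auto
  have "dist (t^p * ln A) (t^p * ln B) = \<bar>t^p\<bar> * \<bar>ln A - ln B\<bar>"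
    by (simp add: dist_real_def abs_mult right_diff_distrib[symmetric])
  also have "\<dots> \<le> 1 * \<bar>A - B\<bar>"
    using assms abs_ln_diff_le[OF A1 B1] by (intro mult_mono) (auto simp: power_abs power_le_one)
  also have "\<bar>A - B\<bar> \<le> cmod ((1 + complex_of_real x * cis (2*pi*t)) - (1 + complex_of_real y * cis (2*pi*t)))"
    unfolding A_def B_def by (rule norm_triangle_ineq3)
  also have "(1 + complex_of_real x * cis (2*pi*t)) - (1 + complex_of_real y * cis (2*pi*t))
      = complex_of_real (x - y) * cis (2*pi*t)" by (simp add: algebra_simps)
  finally show ?thesis
    unfolding A_def B_def by (simp only: norm_mult norm_of_real norm_cis mult_1_left mult_1_right)
qed

lemma integral_moment_ln_norm_one_plus_cis_tendsto:
  fixes s :: "nat \<Rightarrow> real"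
  assumes s: "s \<longlonglongrightarrow> 1" and s0: "\<And>m. 0 \<le> s m"
  shows "(\<lambda>m. integral {0..1/4} (\<lambda>t. t^p * ln (cmod (1 + complex_of_real (s m) * cis (2*pi*t)))))
    \<longlonglongrightarrow> integral {0..1/4} (\<lambda>t. t^p * ln (cmod (1 + complex_of_real 1 * cis (2*pi*t))))"
proof -
  define F where "F x t = t^p * ln (cmod (1 + complex_of_real x * cis (2*pi*t)))" for x t :: real
  have "uniform_limit {0..1/4} (\<lambda>m. F (s m)) (F 1) sequentially"
  proof (rule uniform_limitI)
    fix e :: real assume "e > 0"
    with s have "\<forall>\<^sub>F m in sequentially. \<bar>s m - 1\<bar> < e"
      by (simp add: tendsto_iff dist_real_def)
    then show "\<forall>\<^sub>F m in sequentially. \<forall>t\<in>{0..1/4}. dist (F (s m) t) (F 1 t) < e"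
    proof eventually_elim
      case (elim m)
      show ?case
        using dist_moment_ln_norm_one_plus_cis[OF s0[of m] zero_le_one] elim unfolding F_def
        by (blast intro: le_less_trans)
    qed
  qed
  moreover have "continuous_on {0..1/4} (F (s m))" for m
    unfolding F_def
  proof (intro continuous_intros ballI)
    fix t :: real assume "t \<in> {0..1/4}"
    then have "1 \<le> cmod (1 + complex_of_real (s m) * cis (2*pi*t))"
      using s0 by (intro norm_one_plus_cis_ge_1) auto
    then show "cmod (1 + complex_of_real (s m) * cis (2*pi*t)) \<noteq> 0" by linarith
  qed
  ultimately obtain I J where I: "\<And>m. (F (s m) has_integral I m) {0..1/4}"
    and J: "(F 1 has_integral J) {0..1/4}" and lim: "I \<longlonglongrightarrow> J"
    by (rule uniform_limit_integral) auto
  have "integral {0..1/4} (F (s m)) = I m" for m using I[of m] by (rule integral_unique)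
  moreover have "integral {0..1/4} (F 1) = J" using J by (rule integral_unique)
  ultimately have "(\<lambda>m. integral {0..1/4} (F (s m))) \<longlonglongrightarrow> integral {0..1/4} (F 1)"
    using lim by simp
  then show ?thesis unfolding F_def[abs_def] .
qed

lemma cos_moment_series_sums_integral:
  "(\<lambda>k. (-1)^(k+1) / real k * cos_moment p k) sums integral {0..1/4} (\<lambda>t. t^p * ln (2 * cos (pi*t)))"
proof -
  define R where "R s = (\<Sum>k. (-1)^(k+1) / real k * s^k * cos_moment p k)" for s :: real
  define L where "L s = integral {0..1/4} (\<lambda>t. t^p * ln (cmod (1 + complex_of_real s * cis (2*pi*t))))" for s :: real
  define s where "s m = 1 + - inverse (real (Suc m))" for m
  have s01: "0 \<le> s m" "s m < 1" for m by (auto simp: s_def field_simps)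
  have s_lim: "s \<longlonglongrightarrow> 1"
    unfolding s_def[abs_def] by (rule LIMSEQ_inverse_real_of_nat_add_minus)
  have "continuous_on {0..1} R"
    unfolding R_def[abs_def] by (rule cos_moment_power_series_continuous)
  then have "(\<lambda>m. R (s m)) \<longlonglongrightarrow> R 1"
    by (rule continuous_on_tendsto_compose[OF _ s_lim]) (use s01 in \<open>auto intro!: always_eventually less_imp_le\<close>)
  moreover have "R (s m) = L (s m)" for m
    using cos_moment_power_series_sums[OF s01, of m p] unfolding R_def L_def by (rule sums_unique[symmetric])
  moreover have "(\<lambda>m. L (s m)) \<longlonglongrightarrow> L 1"
    unfolding L_def by (rule integral_moment_ln_norm_one_plus_cis_tendsto[OF s_lim s01(1)])
  ultimately have "R 1 = L 1" by (simp add: LIMSEQ_unique)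
  also have "L 1 = integral {0..1/4} (\<lambda>t. t^p * ln (2 * cos (pi*t)))"
    unfolding L_def by (intro integral_cong) (metis atLeastAtMost_iff norm_one_plus_cis_eq)
  finally have R1: "R 1 = integral {0..1/4} (\<lambda>t. t^p * ln (2 * cos (pi*t)))" .
  obtain C where C: "\<And>k s. s \<in> {0..1} \<Longrightarrow>
      \<bar>(-1)^(k+1) / real k * s^k * cos_moment p k\<bar> \<le> C * inverse (real k ^ 2)"
    using cos_moment_power_series_bound[of p] by blast
  have "summable (\<lambda>k. C * inverse (real k ^ 2))"
    by (intro summable_mult inverse_power_summable) simp
  then have "summable (\<lambda>k. (-1)^(k+1) / real k * 1^k * cos_moment p k)"
    by (rule summable_comparison_test[rotated]) (use C[of 1] in auto)
  then show ?thesis using R1 unfolding R_def by (simp add: sums_iff)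
qed

lemma integral_power_quarter: "integral {0..1/4} (\<lambda>t. t^p) = (1/4)^(p+1) / real (p+1)"
proof -
  have "((\<lambda>t. t^p) has_integral ((1/4::real)^(p+1) / real (p+1) - 0^(p+1) / real (p+1))) {0..1/4}"
  proof (rule fundamental_theorem_of_calculus)
    fix t :: real assume "t \<in> {0..1/4}"
    have "((\<lambda>t. t^(p+1) / real (p+1)) has_real_derivative (real (p+1) * t^p) / real (p+1)) (at t)"
      using DERIV_pow[of "p+1" t UNIV] by (intro DERIV_cdivide) simp
    hence "((\<lambda>t. t^(p+1) / real (p+1)) has_real_derivative t^p) (at t)" by simp
    thus "((\<lambda>t. t^(p+1) / real (p+1)) has_vector_derivative t^p) (at t within {0..1/4})"
      by (simp add: has_real_derivative_iff_has_vector_derivative has_vector_derivative_at_within)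
  qed simp
  thus ?thesis by (simp add: integral_unique)
qed

lemma cos_pi_pos_quarter: "t \<in> {0..1/4} \<Longrightarrow> cos (pi*t) > 0"
proof -
  assume t: "t \<in> {0..1/4}"
  have "pi*t \<le> pi*(1/4)" using t by (intro mult_left_mono) auto
  moreover have "0 \<le> pi*t" using t by simp
  moreover have "pi*(1/4) < pi/2" using pi_gt_zero by simp
  ultimately show ?thesis by (intro cos_gt_zero_pi) linarith+
qed

lemma integral_moment_ln_two_cos:
  "integral {0..1/4} (\<lambda>t. t^p * ln (2 * cos (pi*t))) =
     ln 2 * ((1/4)^(p+1) / real (p+1)) + integral {0..1/4} (\<lambda>t. t^p * ln (cos (pi*t)))"
proof -
  have "integral {0..1/4} (\<lambda>t. t^p * ln (2 * cos (pi*t))) =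
        integral {0..1/4} (\<lambda>t. ln 2 * t^p + t^p * ln (cos (pi*t)))"
  proof (rule integral_cong)
    fix t :: real assume "t \<in> {0..1/4}"
    hence "cos (pi*t) > 0" by (rule cos_pi_pos_quarter)
    thus "t^p * ln (2 * cos (pi*t)) = ln 2 * t^p + t^p * ln (cos (pi*t))"
      by (simp add: ln_mult algebra_simps)
  qed
  also have "\<dots> = integral {0..1/4} (\<lambda>t. ln 2 * t^p) + integral {0..1/4} (\<lambda>t. t^p * ln (cos (pi*t)))"
  proof (rule integral_add)
    show "(\<lambda>t. ln 2 * t^p) integrable_on {0..1/4::real}"
      by (intro integrable_continuous_interval continuous_intros)
    show "(\<lambda>t. t^p * ln (cos (pi*t))) integrable_on {0..1/4::real}"
    proof (intro integrable_continuous_interval continuous_intros ballI)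
      fix t :: real assume "t \<in> {0..1/4}"
      hence "cos (pi*t) > 0" by (rule cos_pi_pos_quarter)
      thus "cos (pi*t) \<noteq> 0" by simp
    qed
  qed
  also have "integral {0..1/4} (\<lambda>t. ln 2 * t^p) = ln 2 * ((1/4)^(p+1) / real (p+1))"
    by (simp add: integral_power_quarter)
  finally show ?thesis .
qed

section \<open>Summing the Fourier coefficients\<close>

lemma sums_by_parity:
  fixes f :: "nat \<Rightarrow> real"
  assumes sf: "summable f" and e: "(\<lambda>n. f (2*n)) sums A" and o: "(\<lambda>n. f (2*n+1)) sums B"
  shows "f sums (A + B)"
proof -
  have "(\<lambda>n. sum f {n*2..<n*2+2}) sums suminf f" by (rule sums_group[OF summable_sums[OF sf]]) simp
  moreover have "(\<lambda>n. sum f {n*2..<n*2+2}) = (\<lambda>n. f (2*n) + f (2*n+1))"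
    by (auto simp: numeral_2_eq_2 mult.commute)
  ultimately have "(\<lambda>n. f (2*n) + f (2*n+1)) sums suminf f" by simp
  moreover have "(\<lambda>n. f (2*n) + f (2*n+1)) sums (A + B)" by (rule sums_add[OF e o])
  ultimately have "suminf f = A + B" using sums_unique2 by blast
  thus ?thesis using sf by (simp add: sums_iff)
qed

lemma summable_inverse_power_bound:
  fixes f :: "nat \<Rightarrow> real"
  assumes "s \<ge> 2" "\<And>k. \<bar>f k\<bar> \<le> C * inverse (real k ^ s)"
  shows "summable f"
proof (rule summable_comparison_test[of _ "\<lambda>k. C * inverse (real k ^ s)"])
  show "\<exists>N. \<forall>n\<ge>N. norm (f n) \<le> C * inverse (real n ^ s)" using assms(2) by auto
  show "summable (\<lambda>k. C * inverse (real k ^ s))"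
    by (intro summable_mult inverse_power_summable) (use assms(1) in simp)
qed

lemma zetaE_sums:
  assumes s: "s \<ge> 2"
  shows "(\<lambda>k. (-1)^(k+1) / real k ^ s) sums zetaE s"
proof -
  have sf: "summable (\<lambda>k. (-1)^(k+1) / real k ^ s :: real)"
    by (rule summable_inverse_power_bound[OF s, of _ 1]) (simp add: abs_mult abs_divide divide_inverse power_abs)
  hence "summable (\<lambda>n. (-1)^(Suc n+1) / real (Suc n) ^ s :: real)" by (subst summable_Suc_iff)
  moreover have "(\<lambda>n. (-1)^(Suc n+1) / real (Suc n) ^ s :: real) = (\<lambda>n. (-1)^n / real (n+1) ^ s)" by auto
  ultimately have "(\<lambda>n. (-1)^(Suc n+1) / real (Suc n) ^ s :: real) sums zetaE s"
    unfolding zetaE_def by (simp add: summable_sums)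
  hence "(\<lambda>k. (-1)^(k+1) / real k ^ s) sums (zetaE s + (-1)^(0+1) / real 0 ^ s)"
    by (subst (asm) sums_Suc_iff)
  moreover have "(0::real) ^ s = 0" using s by simp
  ultimately show ?thesis by simp
qed

lemma dbeta_sums:
  assumes s: "s \<ge> 2"
  shows "(\<lambda>n. (-1)^n / real (2*n+1) ^ s) sums dbeta s"
proof -
  have "summable (\<lambda>n. (-1)^n / real (2*n+1) ^ s :: real)"
  proof (rule summable_comparison_test[of _ "\<lambda>n. inverse (real (Suc n) ^ s)"])
    show "\<exists>N. \<forall>n\<ge>N. norm ((-1)^n / real (2*n+1) ^ s :: real) \<le> inverse (real (Suc n) ^ s)"
    proof (intro exI allI impI)
      fix n :: nat
      have "real (Suc n) ^ s \<le> real (2*n+1) ^ s" by (intro power_mono) auto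
      moreover have "0 < real (Suc n) ^ s" by simp
      ultimately show "norm ((-1)^n / real (2*n+1) ^ s :: real) \<le> inverse (real (Suc n) ^ s)"
        by (simp add: abs_divide power_abs inverse_eq_divide frac_le)
    qed
    show "summable (\<lambda>n. inverse (real (Suc n) ^ s))"
      using inverse_power_summable[OF s, where 'a=real] by (subst summable_Suc_iff)
  qed
  thus ?thesis unfolding dbeta_def by (simp add: summable_sums)
qed

lemma i_power_even: "\<i>^(2*l) = (-1)^l"
  by (simp add: power_mult)

lemma i_power_odd: "\<i>^(2*l+1) = (-1)^l * \<i>"
  by (simp add: power_mult)

lemma minus_one_power_cases: "((-1::complex)^l = 1) \<or> ((-1::complex)^l = -1)"
  by (cases "even l") auto

definition ipow_phase :: "nat \<Rightarrow> nat \<Rightarrow> real" where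
  "ipow_phase k j = Re (\<i>^k / \<i>^(j+1))"

lemma ipow_phase_even_even: "ipow_phase (2*n) (2*m) = 0"
  unfolding ipow_phase_def i_power_even Suc_eq_plus1[symmetric]
  by (simp only: Suc_eq_plus1 i_power_odd) (use minus_one_power_cases[of n] minus_one_power_cases[of m] in auto)

lemma ipow_phase_odd_even: "ipow_phase (2*n+1) (2*m) = (-1)^n * (-1)^m"
  unfolding ipow_phase_def i_power_odd
  using minus_one_power_cases[of n] minus_one_power_cases[of m]
  by (cases "even n"; cases "even m") auto

lemma ipow_phase_even_odd: "ipow_phase (2*n) (2*m+1) = (-1)^n * (-1)^(m+1)"
proof -
  have "\<i>^(2*m+1+1) = \<i>^(2*(m+1))" by simp
  thus ?thesis unfolding ipow_phase_def i_power_even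
    by (cases "even n"; cases "even m") auto
qed

lemma ipow_phase_odd_odd: "ipow_phase (2*n+1) (2*m+1) = 0"
proof -
  have "\<i>^(2*m+1+1) = \<i>^(2*(m+1))" by simp
  thus ?thesis unfolding ipow_phase_def i_power_even i_power_odd
    by (cases "even n"; cases "even m") auto
qed

lemma abs_ipow_phase_le_1: "\<bar>ipow_phase k j\<bar> \<le> 1"
  unfolding ipow_phase_def using abs_Re_le_cmod[of "\<i>^k / \<i>^(j+1)"] by (simp add: norm_divide norm_power norm_mult)

lemma phase_series_summable:
  assumes "s \<ge> 2"
  shows "summable (\<lambda>k. (-1)^(k+1) * ipow_phase k j / real k ^ s)"
  by (rule summable_inverse_power_bound[OF assms, of _ 1])
     (simp add: abs_mult abs_divide divide_inverse power_abs mult_left_le_one_le abs_ipow_phase_le_1)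

lemma phase_series_sums_even:
  "(\<lambda>k. (-1)^(k+1) * ipow_phase k (2*m) / real k ^ (2*m+2)) sums ((-1)^m * dbeta (2*m+2))"
proof -
  have "(\<lambda>k. (-1)^(k+1) * ipow_phase k (2*m) / real k ^ (2*m+2)) sums (0 + (-1)^m * dbeta (2*m+2))"
  proof (rule sums_by_parity[OF phase_series_summable])
    show "(\<lambda>n. (-1)^(2*n+1) * ipow_phase (2*n) (2*m) / real (2*n) ^ (2*m+2)) sums 0"
      by (simp add: ipow_phase_even_even)
    have "(\<lambda>n. (-1)^m * ((-1)^n / real (2*n+1) ^ (2*m+2))) sums ((-1)^m * dbeta (2*m+2))"
      by (intro sums_mult dbeta_sums) simp
    moreover have "(\<lambda>n. (-1)^(2*n+1+1) * ipow_phase (2*n+1) (2*m) / real (2*n+1) ^ (2*m+2))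
                 = (\<lambda>n. (-1)^m * ((-1)^n / real (2*n+1) ^ (2*m+2)))"
    proof (rule ext)
      fix n
      show "(-1)^(2*n+1+1) * ipow_phase (2*n+1) (2*m) / real (2*n+1) ^ (2*m+2) = (-1)^m * ((-1)^n / real (2*n+1) ^ (2*m+2))"
        by (subst ipow_phase_odd_even) (simp add: power_add)
    qed
    ultimately show "(\<lambda>n. (-1)^(2*n+1+1) * ipow_phase (2*n+1) (2*m) / real (2*n+1) ^ (2*m+2)) sums ((-1)^m * dbeta (2*m+2))"
      by simp
  qed simp
  thus ?thesis by simp
qed

lemma phase_series_sums_odd:
  "(\<lambda>k. (-1)^(k+1) * ipow_phase k (2*m+1) / real k ^ (2*m+3)) sums ((-1)^(m+1) / 2^(2*m+3) * zetaE (2*m+3))"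
proof -
  have "(\<lambda>k. (-1)^(k+1) * ipow_phase k (2*m+1) / real k ^ (2*m+3)) sums ((-1)^(m+1) / 2^(2*m+3) * zetaE (2*m+3) + 0)"
  proof (rule sums_by_parity[OF phase_series_summable])
    have "(\<lambda>n. ((-1)^(m+1) / 2^(2*m+3)) * ((-1)^(n+1) / real n ^ (2*m+3))) sums ((-1)^(m+1) / 2^(2*m+3) * zetaE (2*m+3))"
      by (intro sums_mult zetaE_sums) simp
    moreover have "(\<lambda>n. (-1)^(2*n+1) * ipow_phase (2*n) (2*m+1) / real (2*n) ^ (2*m+3))
                 = (\<lambda>n. ((-1)^(m+1) / 2^(2*m+3)) * ((-1)^(n+1) / real n ^ (2*m+3)))"
    proof (rule ext)
      fix n
      show "(-1)^(2*n+1) * ipow_phase (2*n) (2*m+1) / real (2*n) ^ (2*m+3) = ((-1)^(m+1) / 2^(2*m+3)) * ((-1)^(n+1) / real n ^ (2*m+3))"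
        by (subst ipow_phase_even_odd) (simp add: power_add power_mult_distrib mult_ac)
    qed
    ultimately show "(\<lambda>n. (-1)^(2*n+1) * ipow_phase (2*n) (2*m+1) / real (2*n) ^ (2*m+3)) sums ((-1)^(m+1) / 2^(2*m+3) * zetaE (2*m+3))"
      by simp
    show "(\<lambda>n. (-1)^(2*n+1+1) * ipow_phase (2*n+1) (2*m+1) / real (2*n+1) ^ (2*m+3)) sums 0"
      unfolding ipow_phase_odd_odd by simp
  qed simp
  thus ?thesis by simp
qed

definition phase_series :: "nat \<Rightarrow> real" where
  "phase_series j = (if even j then (-1)^(j div 2) * dbeta (j+2) else (-1)^(j div 2 + 1) / 2^(j+2) * zetaE (j+2))"

lemma phase_series_sums: "(\<lambda>k. (-1)^(k+1) * ipow_phase k j / real k ^ (j+2)) sums phase_series j"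
proof (cases "even j")
  case True
  then obtain m where j: "j = 2*m" by blast
  show ?thesis using phase_series_sums_even[of m] unfolding j phase_series_def by simp
next
  case False
  then obtain m where j: "j = 2*m+1" using oddE by blast
  have e3: "Suc (Suc (Suc (2 * m))) = 2*m+3" by simp
  have e1: "phase_series (2*m+1) = (-1)^(m+1)/2^(2*m+3) * zetaE(2*m+3)" by (simp add: phase_series_def e3)
  have e2: "2*m+1+2 = 2*m+3" by simp
  show ?thesis unfolding j e1 e2 by (rule phase_series_sums_odd)
qed

lemma exp_quarter: "exp (\<i> * complex_of_real (2*pi*real k) * (1/4)) = \<i>^k"
proof -
  have "exp (\<i> * complex_of_real (2*pi*real k) * (1/4)) = cis (real k * (pi/2))"
    by (simp add: cis_conv_exp mult_ac)
  also have "\<dots> = cis (pi/2) ^ k" by (rule Complex.DeMoivre[symmetric])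
  finally show ?thesis by simp
qed

lemma Re_of_real_mult: "Re (complex_of_real r * z) = r * Re z"
  by simp

definition moment_coeff :: "nat \<Rightarrow> nat \<Rightarrow> real" where
  "moment_coeff p j = (-1)^j * (fact p / fact (p - j)) * (1/4)^(p-j) / (2*pi)^(j+1)"

definition moment_boundary_coeff :: "nat \<Rightarrow> real" where
  "moment_boundary_coeff p = (-1)^p * fact p * Re (1 / \<i>^(p+1)) / (2*pi)^(p+1)"

lemma cos_moment_expansion:
  assumes k: "k \<ge> 1"
  shows "(-1)^(k+1) / real k * cos_moment p k =
     (\<Sum>j\<le>p. moment_coeff p j * ((-1)^(k+1) * ipow_phase k j / real k ^ (j+2))) - moment_boundary_coeff p * ((-1)^(k+1) / real k ^ (p+2))"
proof -
  define w where "w = \<i> * complex_of_real (2*pi*real k)"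
  have w0: "w \<noteq> 0" using k by (simp add: w_def)
  define c where "c j = (-1)^j * (fact p / fact (p - j)) * (1/4::real)^(p-j)" for j
  have wp: "w^n = \<i>^n * complex_of_real ((2*pi*real k)^n)" for n by (simp add: w_def power_mult_distrib)
  have t1: "\<i>^k * ((-1)^j * (fact p / fact (p - j)) * (1/4)^(p-j) / w^(j+1)) =
        complex_of_real (c j / (2*pi*real k)^(j+1)) * (\<i>^k / \<i>^(j+1))" for j
    unfolding wp c_def by (simp add: field_simps)
  have "moment_exp_primitive p w (1/4) = \<i>^k * (\<Sum>j\<le>p. (-1)^j * (fact p / fact (p - j)) * (1/4)^(p-j) / w^(j+1))"
    using moment_exp_primitive_eq[OF w0, of p "1/4"] exp_quarter[of k] by (simp add: w_def)
  also have "\<dots> = (\<Sum>j\<le>p. complex_of_real (c j / (2*pi*real k)^(j+1)) * (\<i>^k / \<i>^(j+1)))"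
    unfolding sum_distrib_left t1 ..
  finally have G1: "Re (moment_exp_primitive p w (1/4)) = (\<Sum>j\<le>p. c j / (2*pi*real k)^(j+1) * ipow_phase k j)"
    unfolding ipow_phase_def by (simp only: Re_sum Re_of_real_mult)
  have e0: "(-1)^p * fact p / (\<i>^(p+1) * complex_of_real R) = complex_of_real ((-1)^p * fact p / R) * (1 / \<i>^(p+1))" for R
    by (simp add: divide_inverse mult_ac)
  have "moment_exp_primitive p w 0 = complex_of_real ((-1)^p * fact p / (2*pi*real k)^(p+1)) * (1 / \<i>^(p+1))"
    using moment_exp_primitive_0[OF w0, of p] unfolding wp e0 .
  hence G0: "Re (moment_exp_primitive p w 0) = (-1)^p * fact p / (2*pi*real k)^(p+1) * Re (1 / \<i>^(p+1))" by (simp only: Re_of_real_mult)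
  have "cos_moment p k = (\<Sum>j\<le>p. c j / (2*pi*real k)^(j+1) * ipow_phase k j) - (-1)^p * fact p / (2*pi*real k)^(p+1) * Re (1 / \<i>^(p+1))"
    using cos_moment_eq[OF k, of p] G1 G0 by (simp add: w_def)
  hence "(-1)^(k+1) / real k * cos_moment p k =
     (\<Sum>j\<le>p. (-1)^(k+1) / real k * (c j / (2*pi*real k)^(j+1) * ipow_phase k j)) - (-1)^(k+1) / real k * ((-1)^p * fact p / (2*pi*real k)^(p+1) * Re (1 / \<i>^(p+1)))"
    by (simp add: right_diff_distrib sum_distrib_left)
  also have "(\<Sum>j\<le>p. (-1)^(k+1) / real k * (c j / (2*pi*real k)^(j+1) * ipow_phase k j)) =
             (\<Sum>j\<le>p. moment_coeff p j * ((-1)^(k+1) * ipow_phase k j / real k ^ (j+2)))"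
    using k by (intro sum.cong refl) (simp add: moment_coeff_def c_def power_mult_distrib field_simps)
  also have "(-1)^(k+1) / real k * ((-1)^p * fact p / (2*pi*real k)^(p+1) * Re (1 / \<i>^(p+1))) =
             moment_boundary_coeff p * ((-1)^(k+1) / real k ^ (p+2))"
    using k by (simp add: moment_boundary_coeff_def power_mult_distrib field_simps)
  finally show ?thesis .
qed

lemma cos_moment_series_sums:
  "(\<lambda>k. (-1)^(k+1) / real k * cos_moment p k) sums ((\<Sum>j\<le>p. moment_coeff p j * phase_series j) - moment_boundary_coeff p * zetaE (p+2))"
proof -
  have "(\<lambda>k. (\<Sum>j\<le>p. moment_coeff p j * ((-1)^(k+1) * ipow_phase k j / real k ^ (j+2))) - moment_boundary_coeff p * ((-1)^(k+1) / real k ^ (p+2)))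
        sums ((\<Sum>j\<le>p. moment_coeff p j * phase_series j) - moment_boundary_coeff p * zetaE (p+2))"
    by (intro sums_diff sums_sum sums_mult phase_series_sums zetaE_sums) simp
  moreover have "(\<lambda>k. (\<Sum>j\<le>p. moment_coeff p j * ((-1)^(k+1) * ipow_phase k j / real k ^ (j+2))) - moment_boundary_coeff p * ((-1)^(k+1) / real k ^ (p+2)))
        = (\<lambda>k. (-1)^(k+1) / real k * cos_moment p k)"
  proof (rule ext)
    fix k show "(\<Sum>j\<le>p. moment_coeff p j * ((-1)^(k+1) * ipow_phase k j / real k ^ (j+2))) - moment_boundary_coeff p * ((-1)^(k+1) / real k ^ (p+2))
        = (-1)^(k+1) / real k * cos_moment p k"
    proof (cases "k = 0")
      case True thus ?thesis by simp
    next
      case False thus ?thesis by (intro cos_moment_expansion[symmetric]) simp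
    qed
  qed
  ultimately show ?thesis by simp
qed

section \<open>The closed form\<close>

lemma sum_atMost_split_parity:
  fixes f :: "nat \<Rightarrow> real"
  shows "(\<Sum>j\<le>p. f j) = (\<Sum>k=0..p div 2. f (2*k)) + (\<Sum>k=1..(p+1) div 2. f (2*k-1))"
proof (induction p)
  case 0 then show ?case by simp
next
  case (Suc p)
  show ?case
  proof (cases "even p")
    case True
    then obtain q where q: "p = 2*q" by blast
    have a: "Suc p div 2 = q" "(Suc p + 1) div 2 = q + 1" "p div 2 = q" "(p+1) div 2 = q" using q by auto
    have "(\<Sum>j\<le>Suc p. f j) = (\<Sum>j\<le>p. f j) + f (Suc p)" by simp
    also have "\<dots> = (\<Sum>k=0..q. f (2*k)) + (\<Sum>k=1..q. f (2*k-1)) + f (2*(q+1) - 1)"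
      using Suc a q by simp
    also have "\<dots> = (\<Sum>k=0..q. f (2*k)) + (\<Sum>k=1..q+1. f (2*k-1))" by simp
    finally show ?thesis using a by simp
  next
    case False
    then obtain q where q: "p = 2*q+1" using oddE by blast
    have a: "Suc p div 2 = q + 1" "(Suc p + 1) div 2 = q + 1" "p div 2 = q" "(p+1) div 2 = q + 1" using q by auto
    have "(\<Sum>j\<le>Suc p. f j) = (\<Sum>j\<le>p. f j) + f (Suc p)" by simp
    also have "\<dots> = (\<Sum>k=0..q. f (2*k)) + (\<Sum>k=1..q+1. f (2*k-1)) + f (2*(q+1))"
      using Suc a q by simp
    also have "\<dots> = (\<Sum>k=0..q+1. f (2*k)) + (\<Sum>k=1..q+1. f (2*k-1))" by simp
    finally show ?thesis using a by simp
  qed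
qed

lemma nat_floor_half: "nat \<lfloor>real p / 2\<rfloor> = p div 2"
proof -
  have "\<lfloor>real p / 2\<rfloor> = \<lfloor>real p / real (2::nat)\<rfloor>" by simp
  also have "\<dots> = int (p div 2)" by (rule floor_divide_of_nat_eq)
  finally show ?thesis by simp
qed

lemma nat_ceiling_half: "nat \<lceil>real p / 2\<rceil> = (p+1) div 2"
proof (cases "even p")
  case True
  then obtain q where q: "p = 2*q" by blast
  have "\<lceil>real p / 2\<rceil> = int q" by (rule ceiling_unique) (auto simp: q)
  thus ?thesis using q by simp
next
  case False
  then obtain q where q: "p = 2*q+1" using oddE by blast
  have "\<lceil>real p / 2\<rceil> = int (q+1)" by (rule ceiling_unique) (auto simp: q)
  thus ?thesis using q by simp
qed

lemma Re_inverse_ipow_eq_sin: "(-1)^p * Re (1 / \<i>^(p+1)) = - sin (real (p+2) * pi / 2)"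
proof (cases "even p")
  case True
  then obtain q where q: "p = 2*q" by blast
  have "\<i>^(p+1) = (-1)^q * \<i>" by (simp add: q i_power_odd)
  hence "Re (1 / \<i>^(p+1)) = 0" using minus_one_power_cases[of q] by auto
  moreover have "sin (real (p+2) * pi / 2) = 0"
  proof -
    have e: "real (p+2) * pi / 2 = real (q+1) * pi" by (simp add: q field_simps)
    show ?thesis by (simp only: e sin_npi)
  qed
  ultimately show ?thesis by simp
next
  case False
  then obtain q where q: "p = 2*q+1" using oddE by blast
  have "\<i>^(p+1) = \<i>^(2*(q+1))" by (simp add: q)
  also have "\<dots> = (-1)^(q+1)" by (rule i_power_even)
  finally have i: "\<i>^(p+1) = (-1)^(q+1)" .
  have "Re (1 / \<i>^(p+1)) = (-1)^(q+1)" unfolding i by (cases "even q") auto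
  moreover have "sin (real (p+2) * pi / 2) = (-1)^(q+1)"
  proof -
    have e: "real (p+2) * pi / 2 = real (q+1) * pi + pi/2" by (simp add: q field_simps)
    show ?thesis by (simp only: e sin_add sin_npi cos_npi sin_pi_half cos_pi_half)
  qed
  moreover have "(-1::real)^p = -1" using q by simp
  ultimately show ?thesis by simp
qed

lemma moment_coeff_even_term:
  assumes "2*k \<le> p"
  shows "moment_coeff p (2*k) * phase_series (2*k) =
     1 / 2^(2*(p+1)) * ((-1)^k * fact (2*k) * real (p choose (2*k)) * (2/pi)^(2*k+1) * dbeta (2*k+2))"
proof -
  obtain d where p: "p = 2*k + d" using assms le_Suc_ex by blast
  have b: "real (p choose (2*k)) = fact p / (fact (2*k) * fact d)"
    using binomial_fact[OF assms, where 'a=real] by (simp add: p)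
  have z: "phase_series (2*k) = (-1)^k * dbeta (2*k+2)" by (simp add: phase_series_def)
  have pw: "(2::real)^(2*(p+1)) = 2^(2*k+1) * 2^(2*k+1) * 4^d"
    by (simp add: p power_add power_mult flip: power_mult_distrib)
  have "moment_coeff p (2*k) = fact p / fact d / (4^d * (2*pi)^(2*k+1))"
    by (simp add: moment_coeff_def p power_one_over field_simps)
  thus ?thesis unfolding z b pw
    by (simp add: power_mult_distrib power_divide field_simps)
qed

lemma moment_coeff_odd_term:
  assumes k: "1 \<le> k" and kp: "2*k-1 \<le> p"
  shows "moment_coeff p (2*k-1) * phase_series (2*k-1) =
     1 / 2^(2*p+3) * ((-1)^(k-1) * fact (2*k-1) / pi^(2*k) * real (p choose (2*k-1)) * zetaE (2*k+1))"
proof -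
  obtain m where km: "k = m+1" using k by (metis add.commute le_Suc_ex plus_1_eq_Suc)
  have j1: "2*(m+1)-1 = 2*m+1" "m+1-1 = m" by auto
  have j2: "2*(m+1) = 2*m+2" "2*(m+1)+1 = 2*m+3" by auto
  obtain d where p: "p = 2*m+1 + d" using kp j1(1) le_Suc_ex unfolding km by (metis le_add_diff_inverse)
  have b: "real (p choose (2*m+1)) = fact p / (fact (2*m+1) * fact d)"
    using binomial_fact[of "2*m+1" p, where 'a=real] by (simp add: p)
  have e3: "Suc (Suc (Suc (2 * m))) = 2*m+3" by simp
  have z: "phase_series (2*m+1) = (-1)^(m+1) / 2^(2*m+3) * zetaE (2*m+3)" by (simp add: phase_series_def e3)
  have pw: "(2::real)^(2*p+3) = 2^(2*m+2) * 2^(2*m+3) * 4^d"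
    by (simp add: p power_add power_mult flip: power_mult_distrib)
  have A: "moment_coeff p (2*m+1) = - (fact p / fact d / (4^d * (2*pi)^(2*m+2)))"
    by (simp add: moment_coeff_def p power_one_over field_simps)
  have gen: "\<And>F G H Z. F \<noteq> 0 \<Longrightarrow> H \<noteq> 0 \<Longrightarrow>
     - (G / H / (4^d * (2*pi)^(2*m+2))) * ((-1)^(m+1) / 2^(2*m+3) * Z) =
     1 / (2^(2*m+2) * 2^(2*m+3) * 4^d) * ((-1)^m * F / pi^(2*m+2) * (G / (F * H)) * Z)"
    by (simp add: power_mult_distrib field_simps)
  have j3: "2*m+2+1 = 2*m+3" by simp
  show ?thesis unfolding km j1 unfolding j2 z b pw A j3
    by (rule gen) simp_all
qed

lemma moment_coeff_sum_eq:
  "real (p+1) * (\<Sum>j\<le>p. moment_coeff p j * phase_series j) =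
     real (p+1) / 2^(2*(p+1)) * (\<Sum>k = 0..p div 2. (-1)^k * fact (2*k) * real (p choose (2*k)) * (2/pi)^(2*k+1) * dbeta (2*k+2))
   + real (p+1) / 2^(2*p+3) * (\<Sum>k = 1..(p+1) div 2. (-1)^(k-1) * fact (2*k-1) / pi^(2*k) * real (p choose (2*k-1)) * zetaE (2*k+1))"
proof -
  have "(\<Sum>j\<le>p. moment_coeff p j * phase_series j) = (\<Sum>k=0..p div 2. moment_coeff p (2*k) * phase_series (2*k)) + (\<Sum>k=1..(p+1) div 2. moment_coeff p (2*k-1) * phase_series (2*k-1))"
    by (rule sum_atMost_split_parity)
  also have "(\<Sum>k=0..p div 2. moment_coeff p (2*k) * phase_series (2*k)) =
     (\<Sum>k=0..p div 2. 1 / 2^(2*(p+1)) * ((-1)^k * fact (2*k) * real (p choose (2*k)) * (2/pi)^(2*k+1) * dbeta (2*k+2)))"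
    by (intro sum.cong refl moment_coeff_even_term) auto
  also have "(\<Sum>k=1..(p+1) div 2. moment_coeff p (2*k-1) * phase_series (2*k-1)) =
     (\<Sum>k=1..(p+1) div 2. 1 / 2^(2*p+3) * ((-1)^(k-1) * fact (2*k-1) / pi^(2*k) * real (p choose (2*k-1)) * zetaE (2*k+1)))"
    by (intro sum.cong refl moment_coeff_odd_term) auto
  finally have e: "(\<Sum>j\<le>p. moment_coeff p j * phase_series j) =
     (\<Sum>k=0..p div 2. 1 / 2^(2*(p+1)) * ((-1)^k * fact (2*k) * real (p choose (2*k)) * (2/pi)^(2*k+1) * dbeta (2*k+2))) +
     (\<Sum>k=1..(p+1) div 2. 1 / 2^(2*p+3) * ((-1)^(k-1) * fact (2*k-1) / pi^(2*k) * real (p choose (2*k-1)) * zetaE (2*k+1)))" .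
  have g: "\<And>(K::real) A B X Y. K * (1/A * X + 1/B * Y) = K / A * X + K / B * Y"
    by (simp add: divide_inverse algebra_simps)
  show ?thesis unfolding e sum_distrib_left[symmetric] by (rule g)
qed

lemma moment_boundary_coeff_eq: "real (p+1) * moment_boundary_coeff p = - (fact (p+1) / (2*pi)^(p+1) * sin (real (p+2) * pi / 2))"
proof -
  have "real (p+1) * moment_boundary_coeff p = real (p+1) * fact p / (2*pi)^(p+1) * ((-1)^p * Re (1 / \<i>^(p+1)))"
    by (simp add: moment_boundary_coeff_def)
  also have "(-1)^p * Re (1 / \<i>^(p+1)) = - sin (real (p+2) * pi / 2)" by (rule Re_inverse_ipow_eq_sin)
  also have "real (p+1) * fact p = (fact (p+1) :: real)" by (simp add: fact_Suc)
  finally show ?thesis by simp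
qed

lemma ln_cos_pi_quarter: "ln (cos (pi/4)) = - ln 2 / 2"
proof -
  have "ln (cos (pi/4)) = ln (sqrt 2 / 2)" by (simp add: cos_45)
  also have "\<dots> = ln (sqrt 2) - ln 2" by (simp add: ln_div)
  also have "ln (sqrt 2) = ln 2 / 2" by (simp add: ln_sqrt)
  finally show ?thesis by simp
qed

lemma logC_quarter_closed_form:
  "logC (p+2) (1/4) = complex_of_real (
      ln 2 / 2^(2*p+3)
      - fact (p+1) / (2*pi)^(p+1) * sin (real (p+2) * pi / 2) * zetaE (p+2)
      - real (p+1) / 2^(2*(p+1)) *
          (\<Sum>k = 0..p div 2. (-1)^k * fact (2*k) * real (p choose (2*k)) * (2/pi)^(2*k+1) * dbeta (2*k+2))
      - real (p+1) / 2^(2*p+3) *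
          (\<Sum>k = 1..(p+1) div 2. (-1)^(k-1) * fact (2*k-1) / pi^(2*k) * real (p choose (2*k-1)) * zetaE (2*k+1)))"
proof -
  define beta_sum where "beta_sum =
    (\<Sum>k = 0..p div 2. (-1)^k * fact (2*k) * real (p choose (2*k)) * (2/pi)^(2*k+1) * dbeta (2*k+2))"
  define eta_sum where "eta_sum =
    (\<Sum>k = 1..(p+1) div 2. (-1)^(k-1) * fact (2*k-1) / pi^(2*k) * real (p choose (2*k-1)) * zetaE (2*k+1))"
  define I where "I = integral {0..1/4} (\<lambda>t. t^p * ln (cos (pi*t)))"
  define S where "S = (\<Sum>j\<le>p. moment_coeff p j * phase_series j)"
  define K where "K = real (p+1)"
  define a where "a = (1/4::real)^(p+1)"
  have "integral {0..1/4} (\<lambda>t. t^p * ln (2 * cos (pi*t))) = S - moment_boundary_coeff p * zetaE (p+2)"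
    unfolding S_def using cos_moment_series_sums_integral cos_moment_series_sums by (rule sums_unique2)
  then have "I = S - moment_boundary_coeff p * zetaE (p+2) - ln 2 * (a / K)"
    unfolding I_def a_def K_def using integral_moment_ln_two_cos[of p] by simp
  then have KI: "K * I = K * S - (K * moment_boundary_coeff p) * zetaE (p+2) - ln 2 * a"
    by (simp add: K_def field_simps)
  have KS: "K * S = K / 2^(2*(p+1)) * beta_sum + K / 2^(2*p+3) * eta_sum"
    unfolding K_def S_def beta_sum_def eta_sum_def by (rule moment_coeff_sum_eq)
  have KB: "K * moment_boundary_coeff p = - (fact (p+1) / (2*pi)^(p+1) * sin (real (p+2) * pi / 2))"
    unfolding K_def by (rule moment_boundary_coeff_eq)
  have a: "ln 2 / 2^(2*p+3) = a * ln 2 / 2"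
    unfolding a_def by (simp add: power_mult power_one_over power_add)
  have "logC (p+2) (1/4) = complex_of_real (a * ln (cos (pi/4)) - K * I)"
    using logC_quarter_eq_integral[of p] by (simp add: a_def K_def I_def)
  also have "a * ln (cos (pi/4)) - K * I =
      ln 2 / 2^(2*p+3) - fact (p+1) / (2*pi)^(p+1) * sin (real (p+2) * pi / 2) * zetaE (p+2)
      - K / 2^(2*(p+1)) * beta_sum - K / 2^(2*p+3) * eta_sum"
    unfolding KI KS KB a ln_cos_pi_quarter by (simp add: algebra_simps)
  finally show ?thesis unfolding K_def beta_sum_def eta_sum_def .
qed

theorem theorem2p4:
  fixes r :: nat
  assumes "r \<ge> 2"
  shows "logC r (1/4) = complex_of_real (
      ln 2 / 2 ^ (2*r - 1)
      - fact (r - 1) / (2 * pi) ^ (r - 1) * sin (real r * pi / 2) * zetaE r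
      - (real r - 1) / 2 ^ (2*(r - 1)) *
          (\<Sum>k = 0..nat \<lfloor>(real r - 2) / 2\<rfloor>.
              (-1) ^ k * fact (2*k) * real ((r - 2) choose (2*k)) * (2 / pi) ^ (2*k + 1) * dbeta (2*k + 2))
      - (real r - 1) / 2 ^ (2*r - 1) *
          (\<Sum>k = 1..nat \<lceil>(real r - 2) / 2\<rceil>.
              (-1) ^ (k - 1) * fact (2*k - 1) / pi ^ (2*k) * real ((r - 2) choose (2*k - 1)) * zetaE (2*k + 1)))"
proof -
  obtain p where r: "r = p + 2" using assms by (metis le_add_diff_inverse2)
  have index: "r - 1 = p + 1" "2*r - 1 = 2*p+3" "2*(r-1) = 2*(p+1)" "r - 2 = p"
       "real r - 1 = real (p+1)" "real r - 2 = real p" using r by auto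
  show ?thesis
    unfolding index nat_floor_half nat_ceiling_half unfolding r by (rule logC_quarter_closed_form)
qed

end
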